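(* Let $(S,|\cdot|)$ be a finite metric space with $n$ points, $t\ge1$, $G'=(S,E')$ a $t$-spanner for $S$, $f$ an integer with $1\le f\le (n-1)/2$, and $G=(S,E)$ the graph obtained from $G'$ by the construction in the context. Let $F\subseteq E$ be such that $(S,F)$ has maximum degree at most $f$. Then for every edge $\{a,b\}\in E'$ there exists a shortest path between $a$ and $b$ in the graph $G\setminus F$ all of whose vertices belong to $C_{ab}\cup\{a,b\}$.
   Context: All graphs on $S$ have edge weights $|pq|$; path lengths are sums of edge weights. A graph $G'=(S,E')$ is a $t$-spanner for $S$ if its shortest-path distance satisfies $\delta_{G'}(p,q)\le t|pq|$ for all $p,q$. $G\setminus F$ is the graph with vertex set $S$ and edge set $E\setminus F$. Construction: for each edge $\{a,b\}\in E'$, list the points of $S\setminus\{a,b\}$ as $c_1,\dots,c_{n-2}$ in non-decreasing order of $|ac_i|+|c_ib|$ (ties broken arbitrarily) and let $C_{ab}=\{c_1,\dots,c_{2f-1}\}$. The graph $G=(S,E)$ has edge set $E=E'\cup\{\{a,c\},\{c,b\}:\{a,b\}\in E',\ c\in C_{ab}\}$. *)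

theory Defs
  imports Complex_Main
begin

definition metric_on :: "'a set \<Rightarrow> ('a \<Rightarrow> 'a \<Rightarrow> real) \<Rightarrow> bool" where
  "metric_on S d \<longleftrightarrow>
     (\<forall>x\<in>S. \<forall>y\<in>S. d x y \<ge> 0 \<and> (d x y = 0 \<longleftrightarrow> x = y) \<and> d x y = d y x) \<and>
     (\<forall>x\<in>S. \<forall>y\<in>S. \<forall>z\<in>S. d x z \<le> d x y + d y z)"

definition edges_on :: "'a set \<Rightarrow> 'a set set \<Rightarrow> bool" where
  "edges_on S E \<longleftrightarrow> E \<subseteq> {{p, q} | p q. p \<in> S \<and> q \<in> S \<and> p \<noteq> q}"

definition is_path :: "'a set \<Rightarrow> 'a set set \<Rightarrow> 'a \<Rightarrow> 'a \<Rightarrow> 'a list \<Rightarrow> bool" where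
  "is_path S E a b P \<longleftrightarrow> P \<noteq> [] \<and> hd P = a \<and> last P = b \<and> distinct P \<and> set P \<subseteq> S \<and>
     (\<forall>i. Suc i < length P \<longrightarrow> {P ! i, P ! Suc i} \<in> E)"

definition path_len :: "('a \<Rightarrow> 'a \<Rightarrow> real) \<Rightarrow> 'a list \<Rightarrow> real" where
  "path_len d P = (\<Sum>i<length P - 1. d (P ! i) (P ! Suc i))"

definition shortest_path :: "'a set \<Rightarrow> ('a \<Rightarrow> 'a \<Rightarrow> real) \<Rightarrow> 'a set set \<Rightarrow> 'a \<Rightarrow> 'a \<Rightarrow> 'a list \<Rightarrow> bool" where
  "shortest_path S d E a b P \<longleftrightarrow> is_path S E a b P \<and>
     (\<forall>Q. is_path S E a b Q \<longrightarrow> path_len d P \<le> path_len d Q)"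

definition graph_dist :: "'a set \<Rightarrow> ('a \<Rightarrow> 'a \<Rightarrow> real) \<Rightarrow> 'a set set \<Rightarrow> 'a \<Rightarrow> 'a \<Rightarrow> real" where
  "graph_dist S d E p q = Inf (path_len d ` {P. is_path S E p q P})"

definition is_spanner :: "'a set \<Rightarrow> ('a \<Rightarrow> 'a \<Rightarrow> real) \<Rightarrow> real \<Rightarrow> 'a set set \<Rightarrow> bool" where
  "is_spanner S d t E \<longleftrightarrow> edges_on S E \<and>
     (\<forall>p\<in>S. \<forall>q\<in>S. (\<exists>P. is_path S E p q P) \<and> graph_dist S d E p q \<le> t * d p q)"

text \<open>C is a valid choice of the sets C_ab: for each edge {a,b} of E', C{a,b} consists of the
  first 2f-1 points of S - {a,b} in non-decreasing order of |ac|+|cb|, ties broken arbitrarily.\<close>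
definition valid_C :: "'a set \<Rightarrow> ('a \<Rightarrow> 'a \<Rightarrow> real) \<Rightarrow> nat \<Rightarrow> 'a set set \<Rightarrow> ('a set \<Rightarrow> 'a set) \<Rightarrow> bool" where
  "valid_C S d f E' C \<longleftrightarrow> (\<forall>a b. {a, b} \<in> E' \<longrightarrow>
      C {a, b} \<subseteq> S - {a, b} \<and> card (C {a, b}) = 2 * f - 1 \<and>
      (\<forall>c\<in>C {a, b}. \<forall>c'\<in>S - {a, b} - C {a, b}. d a c + d c b \<le> d a c' + d c' b))"

definition constr_edges :: "'a set set \<Rightarrow> ('a set \<Rightarrow> 'a set) \<Rightarrow> 'a set set" where
  "constr_edges E' C = E' \<union> {{a, c} | a b c. {a, b} \<in> E' \<and> c \<in> C {a, b}}
                          \<union> {{c, b} | a b c. {a, b} \<in> E' \<and> c \<in> C {a, b}}"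

definition max_degree_le :: "'a set \<Rightarrow> 'a set set \<Rightarrow> nat \<Rightarrow> bool" where
  "max_degree_le S F f \<longleftrightarrow> (\<forall>v\<in>S. card {e \<in> F. v \<in> e} \<le> f)"

end

theory Submission imports Defs begin

text \<open>If the edge \<open>{a,b}\<close> survives the failure set F, the one-edge path is shortest by the
  triangle inequality. Otherwise F already uses the edge \<open>{a,b}\<close> at both a and b, so at most
  \<open>f - 1\<close> points of \<open>C\<^sub>a\<^sub>b\<close> lose their edge to a, and at most \<open>f - 1\<close> lose their edge to b;
  as \<open>|C\<^sub>a\<^sub>b| = 2f - 1\<close>, some \<open>c \<in> C\<^sub>a\<^sub>b\<close> keeps both, giving the path a, c, b. In either
  case the chosen path is no longer than \<open>|ax| + |xb|\<close> for every point x outside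
  \<open>C\<^sub>a\<^sub>b \<union> {a,b}\<close>, so any shortest path leaving \<open>C\<^sub>a\<^sub>b \<union> {a,b}\<close> can be replaced by it.\<close>

lemma path_len_singleton [simp]: "path_len d [x] = 0"
  by (simp add: path_len_def)

lemma path_len_Cons_Cons: "path_len d (x # y # xs) = d x y + path_len d (y # xs)"
proof -
  have "path_len d (x # y # xs) = (\<Sum>i<Suc (length xs). d ((x # y # xs) ! i) ((x # y # xs) ! Suc i))"
    by (simp add: path_len_def)
  also have "\<dots> = d x y + (\<Sum>i<length xs. d ((y # xs) ! i) ((y # xs) ! Suc i))"
    by (subst sum.lessThan_Suc_shift) simp
  finally show ?thesis by (simp add: path_len_def)
qed

lemma path_len_append: "path_len d (xs @ x # ys) = path_len d (xs @ [x]) + path_len d (x # ys)"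
proof (induction xs)
  case (Cons u xs)
  then show ?case by (cases xs) (simp_all add: path_len_Cons_Cons)
qed simp

lemma dist_le_path_len:
  assumes "metric_on S d" "set P \<subseteq> S" "P \<noteq> []"
  shows "d (hd P) (last P) \<le> path_len d P"
  using assms(2,3)
proof (induction P)
  case (Cons x P)
  show ?case
  proof (cases P)
    case Nil
    have "d x x = 0" using Cons.prems assms(1) unfolding metric_on_def by simp
    with Nil show ?thesis by simp
  next
    case (Cons y ys)
    with Cons.IH Cons.prems have IH: "d y (last P) \<le> path_len d P" by simp
    have "last P \<in> S" using Cons.prems \<open>P = y # ys\<close> last_in_set by fastforce
    with Cons.prems \<open>P = y # ys\<close> assms(1) have "d x (last P) \<le> d x y + d y (last P)"
      unfolding metric_on_def by simp
    with IH \<open>P = y # ys\<close> show ?thesis by (simp add: path_len_Cons_Cons)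
  qed
qed simp

lemma path_len_ge_detour:
  assumes "metric_on S d" "is_path S E a b Q" "x \<in> set Q"
  shows "d a x + d x b \<le> path_len d Q"
proof -
  obtain Q1 Q2 where Q: "Q = Q1 @ x # Q2" using split_list[OF assms(3)] by blast
  have Q_props: "set Q \<subseteq> S" "hd Q = a" "last Q = b"
    using assms(2) unfolding is_path_def by blast+
  then have S: "set (Q1 @ [x]) \<subseteq> S" "set (x # Q2) \<subseteq> S" using Q by auto
  have hd: "hd (Q1 @ [x]) = a" using Q_props(2) Q by (cases Q1) simp_all
  have last: "last (x # Q2) = b" using Q_props(3) Q by (cases Q2) simp_all
  have "d a x \<le> path_len d (Q1 @ [x])"
    using dist_le_path_len[OF assms(1) S(1)] hd by simp
  moreover have "d x b \<le> path_len d (x # Q2)"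
    using dist_le_path_len[OF assms(1) S(2)] last by simp
  moreover have "path_len d Q = path_len d (Q1 @ [x]) + path_len d (x # Q2)"
    unfolding Q by (rule path_len_append)
  ultimately show ?thesis by simp
qed

lemma finite_paths: "finite S \<Longrightarrow> finite {P. is_path S E a b P}"
  by (rule finite_subset[OF _ finite_subset_distinct]) (unfold is_path_def, blast)

lemma shortest_path_exists:
  assumes "finite S" "is_path S E a b P\<^sub>0"
  obtains P where "shortest_path S d E a b P"
proof -
  let ?A = "{P. is_path S E a b P}"
  have "finite ?A" "?A \<noteq> {}" using finite_paths[OF assms(1)] assms(2) by blast+
  from ex_is_arg_min_if_finite[OF this, of "path_len d"]
  obtain P where "P \<in> ?A" "\<forall>Q\<in>?A. path_len d P \<le> path_len d Q"
    unfolding is_arg_min_def by (auto simp: not_less)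
  then show ?thesis using that unfolding shortest_path_def by blast
qed

lemma shortest_path_within:
  assumes "finite S" "metric_on S d" "is_path S E a b P\<^sub>0" "set P\<^sub>0 \<subseteq> V"
    and detour: "\<forall>x\<in>S - V. path_len d P\<^sub>0 \<le> d a x + d x b"
  shows "\<exists>P. shortest_path S d E a b P \<and> set P \<subseteq> V"
proof -
  obtain P where P: "shortest_path S d E a b P"
    using shortest_path_exists[OF assms(1,3)] by blast
  show ?thesis
  proof (cases "set P \<subseteq> V")
    case True
    with P show ?thesis by blast
  next
    case False
    then obtain x where x: "x \<in> set P" "x \<notin> V" by blast
    have P_path: "is_path S E a b P" using P unfolding shortest_path_def by blast
    then have "x \<in> S" using x(1) unfolding is_path_def by blast
    with x(2) detour have "path_len d P\<^sub>0 \<le> d a x + d x b" by blast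
    also have "\<dots> \<le> path_len d P" using path_len_ge_detour[OF assms(2) P_path x(1)] .
    finally have "shortest_path S d E a b P\<^sub>0"
      using P assms(3) unfolding shortest_path_def by (meson order_trans)
    with assms(4) show ?thesis by blast
  qed
qed

lemma card_le_degree:
  assumes "finite F" "\<forall>c\<in>N. {a, c} \<in> F"
  shows "card N \<le> card {e \<in> F. a \<in> e}"
proof (rule card_inj_on_le)
  show "inj_on (\<lambda>c. {a, c}) N" by (rule inj_onI) (auto simp: doubleton_eq_iff)
  show "(\<lambda>c. {a, c}) ` N \<subseteq> {e \<in> F. a \<in> e}" using assms(2) by blast
  show "finite {e \<in> F. a \<in> e}" using assms(1) by simp
qed

text \<open>The edge \<open>{a,b}\<close> itself uses up one of the f failures allowed at a and at b.\<close>
lemma exists_two_hop_avoiding: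
  assumes "finite F" "{a, b} \<in> F" "finite C" "a \<notin> C" "b \<notin> C" "card C = 2 * f - 1"
    and "card {e \<in> F. a \<in> e} \<le> f" "card {e \<in> F. b \<in> e} \<le> f"
  shows "\<exists>c\<in>C. {a, c} \<notin> F \<and> {c, b} \<notin> F"
proof (rule ccontr)
  let ?N\<^sub>a = "{c \<in> C. {a, c} \<in> F}" and ?N\<^sub>b = "{c \<in> C. {b, c} \<in> F}"
  have "card (insert b ?N\<^sub>a) \<le> f"
    using card_le_degree[OF assms(1), of "insert b ?N\<^sub>a" a] assms(2,7) by auto
  then have N\<^sub>a: "card ?N\<^sub>a + 1 \<le> f" using assms(3,5) by simp
  have "card (insert a ?N\<^sub>b) \<le> f"
    using card_le_degree[OF assms(1), of "insert a ?N\<^sub>b" b] assms(2,8)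
    by (auto simp: insert_commute)
  then have N\<^sub>b: "card ?N\<^sub>b + 1 \<le> f" using assms(3,4) by simp
  assume "\<not> ?thesis"
  then have "C \<subseteq> ?N\<^sub>a \<union> ?N\<^sub>b" by (auto simp: insert_commute)
  then have "card C \<le> card (?N\<^sub>a \<union> ?N\<^sub>b)" using assms(3) by (simp add: card_mono)
  also have "\<dots> \<le> card ?N\<^sub>a + card ?N\<^sub>b" by (rule card_Un_le)
  finally show False using N\<^sub>a N\<^sub>b assms(6) by linarith
qed

lemma edges_on_memD: "edges_on S E \<Longrightarrow> {x, y} \<in> E \<Longrightarrow> x \<in> S \<and> y \<in> S \<and> x \<noteq> y"
  unfolding edges_on_def by (auto simp: doubleton_eq_iff)

lemma constr_edges_subset_Pow:
  assumes "edges_on S E'" "valid_C S d f E' C"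
  shows "constr_edges E' C \<subseteq> Pow S"
proof -
  have "C {x, y} \<subseteq> S" if "{x, y} \<in> E'" for x y
    using assms(2) that unfolding valid_C_def by blast
  with assms(1) show ?thesis
    unfolding constr_edges_def by (fastforce dest: edges_on_memD simp: edges_on_def)
qed

theorem lemma4:
  fixes S :: "'a set" and d :: "'a \<Rightarrow> 'a \<Rightarrow> real" and t :: real and f :: nat
    and E' F :: "'a set set" and C :: "'a set \<Rightarrow> 'a set"
  assumes "finite S" and "metric_on S d"
    and "t \<ge> 1" and "is_spanner S d t E'"
    and "1 \<le> f" and "2 * f \<le> card S - 1"
    and "valid_C S d f E' C"
    and "F \<subseteq> constr_edges E' C" and "max_degree_le S F f"
  shows "\<forall>a b. {a, b} \<in> E' \<longrightarrow>
           (\<exists>P. shortest_path S d (constr_edges E' C - F) a b P \<and> set P \<subseteq> C {a, b} \<union> {a, b})"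
proof (intro allI impI)
  fix a b assume ab: "{a, b} \<in> E'"
  let ?G = "constr_edges E' C - F" and ?V = "C {a, b} \<union> {a, b}"
  have E': "edges_on S E'" using assms(4) unfolding is_spanner_def by blast
  with ab have ab_S: "a \<in> S" "b \<in> S" "a \<noteq> b" by (auto dest: edges_on_memD)
  from assms(7) ab have C: "C {a, b} \<subseteq> S - {a, b}" "card (C {a, b}) = 2 * f - 1"
    and C_min: "\<forall>c\<in>C {a, b}. \<forall>x\<in>S - ?V. d a c + d c b \<le> d a x + d x b"
    unfolding valid_C_def by (blast, blast, simp add: Diff_Un)
  have "finite F"
    using constr_edges_subset_Pow[OF E' assms(7)] assms(1,8) by (meson finite_Pow_iff finite_subset)
  show "\<exists>P. shortest_path S d ?G a b P \<and> set P \<subseteq> ?V"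
  proof (cases "{a, b} \<in> F")
    case False
    with ab have "is_path S ?G a b [a, b]"
      using ab_S by (auto simp: is_path_def constr_edges_def less_Suc_eq)
    moreover have "\<forall>x\<in>S. d a b \<le> d a x + d x b"
      using assms(2) ab_S unfolding metric_on_def by blast
    then have "\<forall>x\<in>S - ?V. path_len d [a, b] \<le> d a x + d x b"
      by (simp add: path_len_Cons_Cons)
    ultimately show ?thesis using shortest_path_within[OF assms(1,2)] by simp
  next
    case True
    have "finite (C {a, b})" using C(1) assms(1) finite_subset by blast
    moreover have "card {e \<in> F. a \<in> e} \<le> f" "card {e \<in> F. b \<in> e} \<le> f"
      using assms(9) ab_S unfolding max_degree_le_def by blast+
    ultimately obtain c where c: "c \<in> C {a, b}" "{a, c} \<notin> F" "{c, b} \<notin> F"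
      using exists_two_hop_avoiding[OF \<open>finite F\<close> True _ _ _ C(2)] C(1) by blast
    with ab C(1) have "is_path S ?G a b [a, c, b]"
      using ab_S by (auto simp: is_path_def constr_edges_def less_Suc_eq nth_Cons')
    moreover have "\<forall>x\<in>S - ?V. path_len d [a, c, b] \<le> d a x + d x b"
      using C_min c(1) by (simp add: path_len_Cons_Cons)
    ultimately show ?thesis using shortest_path_within[OF assms(1,2)] c(1) by simp
  qed
qed

end
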